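(* Let $G$ be a CGS, $s$ a state of $G$, and $\varphi$ a positive ATL/ATL$^\ast$ formula. Let $\pi_1,\pi_2:Ag\to\{\mathtt{Ir},\mathtt{IR},\mathtt{ir},\mathtt{iR}\}$ be such that $(G,\pi_1)$ and $(G,\pi_2)$ are ACGSs and $\pi_1\preceq_{Ag_\varphi}\pi_2$. If $(G,\pi_2),s\models\varphi$, then $(G,\pi_1),s\models\varphi$.
   Context: Fix a finite set $AP$ of atomic propositions. A concurrent game structure (CGS) is a tuple $G=(S,S_0,Ag,(Ac_i)_{i\in Ag},(\sim_i)_{i\in Ag},(P_i)_{i\in Ag},\Delta,\lambda)$ where $S$ is a finite set of states, $S_0\subseteq S$ initial states, $Ag=\{1,\dots,n\}$ agents, $Ac_i$ finite local actions of agent $i$, $\sim_i\subseteq S\times S$ an equivalence relation, $P_i:S\to 2^{Ac_i}$ a protocol with $P_i(s)=P_i(s')$ whenever $s\sim_i s'$, $\Delta:S\times\prod_{i\in Ag}Ac_i\to S$, and $\lambda:S\to 2^{AP}$. A path is an infinite sequence $s_0s_1\dots$ with $s_{j+1}=\Delta(s_j,\vec a_j)$ for some $\vec a_j\in\prod_iP_i(s_j)$; a history is a finite nonempty prefix of a path ($\mathrm{FPath}$ the set of histories, $\mathrm{last}(\rho)$ its last state). Histories $s_0\dots s_m$, $s'_0\dots s'_m$ are indistinguishable for $i$ if $s_j\sim_is'_j$ for all $j$. Strategy types: an $\mathtt{Ir}$-strategy of $i$ is $\theta:S\to Ac_i$ with $\theta(s)\in P_i(s)$; an $\mathtt{IR}$-strategy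 is $\theta:\mathrm{FPath}\to Ac_i$ with $\theta(\rho)\in P_i(\mathrm{last}(\rho))$; an $\mathtt{ir}$-strategy is an $\mathtt{Ir}$-strategy with $s\sim_is'\Rightarrow\theta(s)=\theta(s')$; an $\mathtt{iR}$-strategy is an $\mathtt{IR}$-strategy giving equal actions on histories indistinguishable for $i$. Memoryless strategies act on histories via the last state. Given a state $s$ and a strategy for every agent, the play from $s$ is the unique path $\rho$ with $\rho_0=s$, $\rho_{j+1}=\Delta(\rho_j,\vec a_j)$, $\vec a_j(i)$ the action of $i$'s strategy on $\rho_0\dots\rho_j$. An ACGS is a pair $M=(G,\pi)$ with $\pi:Ag\to\{\mathtt{Ir},\mathtt{IR},\mathtt{ir},\mathtt{iR}\}$ such that $\sim_i$ is the identity whenever $\pi(i)\in\{\mathtt{IR},\mathtt{Ir}\}$. ATL$^\ast$: state formulas $\varphi::=q\mid\neg\varphi\mid\varphi\wedge\varphi\mid\langle\langle A\rangle\rangle\phi$, path formulas $\phi::=\varphi\mid\neg\phi\mid\phi\wedge\phi\mid\mathbf X\phi\mid\phi\,\mathbf U\,\phi$, with derived $\vee$, $\mathbf F$, $\mathbf G$, $\mathbf R$ as usual and $[[A]]\phi=\neg\langle\langle A\rangle\rangle\neg\phi$; ATL is the fragment where each $\langle\langle A\rangle\rangle$ is immediately followed by $\mathbf X$, $\mathbf U$ or $\mathbf R$ applied to state formulas. Semantics over $M$: standard for atoms ($q\in\lambda(s)$), Booleans and temporal operators on paths; $M,s\models\langle\langle A\rangle\rangle\phi$ iff there is an assignment of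 a $\pi(i)$-strategy to each $i\in A$ such that for every assignment of a $\pi(i)$-strategy to each $i\in Ag\setminus A$, the resulting play from $s$ satisfies $\phi$. A formula $\varphi$ is positive if (1) for each occurrence of $\langle\langle A\rangle\rangle\phi$ in $\varphi$, $\phi$ is an LTL formula (a path formula whose state subformulas are atomic propositions), (2) $[[A]]\phi$ does not occur in $\varphi$, and (3) negations occur only directly in front of atomic propositions. $Ag_\varphi$ is the set of agents appearing in $\varphi$. For $A\subseteq Ag$, $\pi_1\preceq_A\pi_2$ ($\pi_1$ coarser than $\pi_2$ w.r.t. $A$) means $\pi_1(i)=\pi_2(i)$ for all $i\in A$ and for every $j\in Ag\setminus A$ one of: $\pi_1(j)=\mathtt{IR}$ and $\pi_2(j)=\mathtt{IR}$; $\pi_1(j)=\mathtt{Ir}$ and $\pi_2(j)\in\{\mathtt{IR},\mathtt{Ir}\}$; $\pi_1(j)=\mathtt{iR}$ and $\pi_2(j)\in\{\mathtt{IR},\mathtt{iR}\}$; $\pi_1(j)=\mathtt{ir}$ (and $\pi_2(j)$ arbitrary). *)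

theory Defs
  imports Main
begin

text \<open>The set of states S is the (finite) type 's
  and the set of agents Ag is the (finite) type 'ag (both are instantiated
  with sort finite in the theorem). Local actions of agent i are the finite
  set Act i of actions (drawn from a common type 'act); a joint action is a
  function 'ag \<Rightarrow> 'act.\<close>

record ('s, 'ag, 'act, 'ap) cgs =
  Init  :: "'s set"
  Act   :: "'ag \<Rightarrow> 'act set"
  Indist :: "'ag \<Rightarrow> 's \<Rightarrow> 's \<Rightarrow> bool"
  Prot  :: "'ag \<Rightarrow> 's \<Rightarrow> 'act set"
  Trans :: "'s \<Rightarrow> ('ag \<Rightarrow> 'act) \<Rightarrow> 's"
  Lab   :: "'s \<Rightarrow> 'ap set"

definition wf_cgs :: "('s, 'ag, 'act, 'ap) cgs \<Rightarrow> bool" where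
  "wf_cgs G \<longleftrightarrow>
     (\<forall>i. finite (Act G i)) \<and>
     (\<forall>i. equivp (Indist G i)) \<and>
     (\<forall>i s. Prot G i s \<subseteq> Act G i) \<and>
     (\<forall>i s s'. Indist G i s s' \<longrightarrow> Prot G i s = Prot G i s')"

definition is_path :: "('s, 'ag, 'act, 'ap) cgs \<Rightarrow> (nat \<Rightarrow> 's) \<Rightarrow> bool" where
  "is_path G p \<longleftrightarrow>
     (\<forall>j. \<exists>a. (\<forall>i. a i \<in> Prot G i (p j)) \<and> p (Suc j) = Trans G (p j) a)"

definition FPath :: "('s, 'ag, 'act, 'ap) cgs \<Rightarrow> 's list set" where
  "FPath G = {h. h \<noteq> [] \<and> (\<exists>p. is_path G p \<and> (\<forall>j < length h. h ! j = p j))}"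

definition hist_indist :: "('s, 'ag, 'act, 'ap) cgs \<Rightarrow> 'ag \<Rightarrow> 's list \<Rightarrow> 's list \<Rightarrow> bool" where
  "hist_indist G i h h' \<longleftrightarrow>
     length h = length h' \<and> (\<forall>j < length h. Indist G i (h ! j) (h' ! j))"

text \<open>Strategy types. Every strategy is represented as a function on histories
  (lists of states); memoryless strategies are those that factor through a
  function on states via the last state.\<close>

datatype stype = Ir | IR | ir | iR

definition is_strat :: "('s, 'ag, 'act, 'ap) cgs \<Rightarrow> stype \<Rightarrow> 'ag \<Rightarrow> ('s list \<Rightarrow> 'act) \<Rightarrow> bool" where
  "is_strat G t i \<theta> \<longleftrightarrow>
     (case t of
        Ir \<Rightarrow> (\<exists>f. (\<forall>s. f s \<in> Prot G i s) \<and> (\<forall>h. \<theta> h = f (last h)))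
      | ir \<Rightarrow> (\<exists>f. (\<forall>s. f s \<in> Prot G i s) \<and> (\<forall>s s'. Indist G i s s' \<longrightarrow> f s = f s')
                 \<and> (\<forall>h. \<theta> h = f (last h)))
      | IR \<Rightarrow> (\<forall>h \<in> FPath G. \<theta> h \<in> Prot G i (last h))
      | iR \<Rightarrow> (\<forall>h \<in> FPath G. \<theta> h \<in> Prot G i (last h)) \<and>
              (\<forall>h \<in> FPath G. \<forall>h' \<in> FPath G. hist_indist G i h h' \<longrightarrow> \<theta> h = \<theta> h'))"

fun play_hist :: "('s, 'ag, 'act, 'ap) cgs \<Rightarrow> ('ag \<Rightarrow> 's list \<Rightarrow> 'act) \<Rightarrow> 's \<Rightarrow> nat \<Rightarrow> 's list" where
  "play_hist G \<sigma> s 0 = [s]"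
| "play_hist G \<sigma> s (Suc n) =
     (let h = play_hist G \<sigma> s n in h @ [Trans G (last h) (\<lambda>i. \<sigma> i h)])"

definition play :: "('s, 'ag, 'act, 'ap) cgs \<Rightarrow> ('ag \<Rightarrow> 's list \<Rightarrow> 'act) \<Rightarrow> 's \<Rightarrow> nat \<Rightarrow> 's" where
  "play G \<sigma> s j = last (play_hist G \<sigma> s j)"

definition acgs :: "('s, 'ag, 'act, 'ap) cgs \<Rightarrow> ('ag \<Rightarrow> stype) \<Rightarrow> bool" where
  "acgs G \<pi> \<longleftrightarrow> wf_cgs G \<and>
     (\<forall>i. \<pi> i \<in> {IR, Ir} \<longrightarrow> (\<forall>s s'. Indist G i s s' \<longleftrightarrow> s = s'))"

text \<open>Disjunction, release and the dual coalition operator are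
  included as primitives (with their standard semantics), so that formulas in
  negation normal form (positive formulas) can be written.\<close>

datatype ('ap, 'ag) sform =
    Prop 'ap
  | SNeg "('ap, 'ag) sform"
  | SAnd "('ap, 'ag) sform" "('ap, 'ag) sform"
  | SOr "('ap, 'ag) sform" "('ap, 'ag) sform"
  | Coal "'ag set" "('ap, 'ag) pform"
  | CoalDual "'ag set" "('ap, 'ag) pform"
and ('ap, 'ag) pform =
    PState "('ap, 'ag) sform"
  | PNeg "('ap, 'ag) pform"
  | PAnd "('ap, 'ag) pform" "('ap, 'ag) pform"
  | POr "('ap, 'ag) pform" "('ap, 'ag) pform"
  | Next "('ap, 'ag) pform"
  | Until "('ap, 'ag) pform" "('ap, 'ag) pform"
  | Release "('ap, 'ag) pform" "('ap, 'ag) pform"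

definition suffix :: "(nat \<Rightarrow> 's) \<Rightarrow> nat \<Rightarrow> nat \<Rightarrow> 's" where
  "suffix p k = (\<lambda>j. p (j + k))"

primrec sat_s :: "('s, 'ag, 'act, 'ap) cgs \<Rightarrow> ('ag \<Rightarrow> stype) \<Rightarrow> 's \<Rightarrow> ('ap, 'ag) sform \<Rightarrow> bool"
and sat_p :: "('s, 'ag, 'act, 'ap) cgs \<Rightarrow> ('ag \<Rightarrow> stype) \<Rightarrow> (nat \<Rightarrow> 's) \<Rightarrow> ('ap, 'ag) pform \<Rightarrow> bool"
where
  "sat_s G \<pi> s (Prop q) = (q \<in> Lab G s)"
| "sat_s G \<pi> s (SNeg \<phi>) = (\<not> sat_s G \<pi> s \<phi>)"
| "sat_s G \<pi> s (SAnd \<phi> \<psi>) = (sat_s G \<pi> s \<phi> \<and> sat_s G \<pi> s \<psi>)"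
| "sat_s G \<pi> s (SOr \<phi> \<psi>) = (sat_s G \<pi> s \<phi> \<or> sat_s G \<pi> s \<psi>)"
| "sat_s G \<pi> s (Coal A \<phi>) =
     (\<exists>\<sigma>A. (\<forall>i\<in>A. is_strat G (\<pi> i) i (\<sigma>A i)) \<and>
       (\<forall>\<sigma>B. (\<forall>i\<in>-A. is_strat G (\<pi> i) i (\<sigma>B i)) \<longrightarrow>
          sat_p G \<pi> (play G (\<lambda>i. if i \<in> A then \<sigma>A i else \<sigma>B i) s) \<phi>))"
| "sat_s G \<pi> s (CoalDual A \<phi>) =
     (\<not> (\<exists>\<sigma>A. (\<forall>i\<in>A. is_strat G (\<pi> i) i (\<sigma>A i)) \<and>
       (\<forall>\<sigma>B. (\<forall>i\<in>-A. is_strat G (\<pi> i) i (\<sigma>B i)) \<longrightarrow>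
          \<not> sat_p G \<pi> (play G (\<lambda>i. if i \<in> A then \<sigma>A i else \<sigma>B i) s) \<phi>)))"
| "sat_p G \<pi> p (PState \<phi>) = sat_s G \<pi> (p 0) \<phi>"
| "sat_p G \<pi> p (PNeg \<phi>) = (\<not> sat_p G \<pi> p \<phi>)"
| "sat_p G \<pi> p (PAnd \<phi> \<psi>) = (sat_p G \<pi> p \<phi> \<and> sat_p G \<pi> p \<psi>)"
| "sat_p G \<pi> p (POr \<phi> \<psi>) = (sat_p G \<pi> p \<phi> \<or> sat_p G \<pi> p \<psi>)"
| "sat_p G \<pi> p (Next \<phi>) = sat_p G \<pi> (suffix p 1) \<phi>"
| "sat_p G \<pi> p (Until \<phi> \<psi>) =
     (\<exists>k. sat_p G \<pi> (suffix p k) \<psi> \<and> (\<forall>j<k. sat_p G \<pi> (suffix p j) \<phi>))"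
| "sat_p G \<pi> p (Release \<phi> \<psi>) =
     (\<forall>k. sat_p G \<pi> (suffix p k) \<psi> \<or> (\<exists>j<k. sat_p G \<pi> (suffix p j) \<phi>))"

primrec is_ltl :: "('ap, 'ag) pform \<Rightarrow> bool" where
  "is_ltl (PState \<phi>) = (case \<phi> of Prop q \<Rightarrow> True | _ \<Rightarrow> False)"
| "is_ltl (PNeg \<phi>) = is_ltl \<phi>"
| "is_ltl (PAnd \<phi> \<psi>) = (is_ltl \<phi> \<and> is_ltl \<psi>)"
| "is_ltl (POr \<phi> \<psi>) = (is_ltl \<phi> \<and> is_ltl \<psi>)"
| "is_ltl (Next \<phi>) = is_ltl \<phi>"
| "is_ltl (Until \<phi> \<psi>) = (is_ltl \<phi> \<and> is_ltl \<psi>)"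
| "is_ltl (Release \<phi> \<psi>) = (is_ltl \<phi> \<and> is_ltl \<psi>)"

primrec nnf_s :: "('ap, 'ag) sform \<Rightarrow> bool"
and nnf_p :: "('ap, 'ag) pform \<Rightarrow> bool" where
  "nnf_s (Prop q) = True"
| "nnf_s (SNeg \<phi>) = (case \<phi> of Prop q \<Rightarrow> True | _ \<Rightarrow> False)"
| "nnf_s (SAnd \<phi> \<psi>) = (nnf_s \<phi> \<and> nnf_s \<psi>)"
| "nnf_s (SOr \<phi> \<psi>) = (nnf_s \<phi> \<and> nnf_s \<psi>)"
| "nnf_s (Coal A \<phi>) = nnf_p \<phi>"
| "nnf_s (CoalDual A \<phi>) = nnf_p \<phi>"
| "nnf_p (PState \<phi>) = nnf_s \<phi>"
| "nnf_p (PNeg \<phi>) = (case \<phi> of PState (Prop q) \<Rightarrow> True | _ \<Rightarrow> False)"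
| "nnf_p (PAnd \<phi> \<psi>) = (nnf_p \<phi> \<and> nnf_p \<psi>)"
| "nnf_p (POr \<phi> \<psi>) = (nnf_p \<phi> \<and> nnf_p \<psi>)"
| "nnf_p (Next \<phi>) = nnf_p \<phi>"
| "nnf_p (Until \<phi> \<psi>) = (nnf_p \<phi> \<and> nnf_p \<psi>)"
| "nnf_p (Release \<phi> \<psi>) = (nnf_p \<phi> \<and> nnf_p \<psi>)"

primrec coal_ok :: "('ap, 'ag) sform \<Rightarrow> bool" where
  "coal_ok (Prop q) = True"
| "coal_ok (SNeg \<phi>) = coal_ok \<phi>"
| "coal_ok (SAnd \<phi> \<psi>) = (coal_ok \<phi> \<and> coal_ok \<psi>)"
| "coal_ok (SOr \<phi> \<psi>) = (coal_ok \<phi> \<and> coal_ok \<psi>)"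
| "coal_ok (Coal A \<phi>) = is_ltl \<phi>"
| "coal_ok (CoalDual A \<phi>) = False"

definition positive :: "('ap, 'ag) sform \<Rightarrow> bool" where
  "positive \<phi> \<longleftrightarrow> coal_ok \<phi> \<and> nnf_s \<phi>"

primrec agents_s :: "('ap, 'ag) sform \<Rightarrow> 'ag set"
and agents_p :: "('ap, 'ag) pform \<Rightarrow> 'ag set" where
  "agents_s (Prop q) = {}"
| "agents_s (SNeg \<phi>) = agents_s \<phi>"
| "agents_s (SAnd \<phi> \<psi>) = agents_s \<phi> \<union> agents_s \<psi>"
| "agents_s (SOr \<phi> \<psi>) = agents_s \<phi> \<union> agents_s \<psi>"
| "agents_s (Coal A \<phi>) = A \<union> agents_p \<phi>"
| "agents_s (CoalDual A \<phi>) = A \<union> agents_p \<phi>"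
| "agents_p (PState \<phi>) = agents_s \<phi>"
| "agents_p (PNeg \<phi>) = agents_p \<phi>"
| "agents_p (PAnd \<phi> \<psi>) = agents_p \<phi> \<union> agents_p \<psi>"
| "agents_p (POr \<phi> \<psi>) = agents_p \<phi> \<union> agents_p \<psi>"
| "agents_p (Next \<phi>) = agents_p \<phi>"
| "agents_p (Until \<phi> \<psi>) = agents_p \<phi> \<union> agents_p \<psi>"
| "agents_p (Release \<phi> \<psi>) = agents_p \<phi> \<union> agents_p \<psi>"

definition coarser :: "('ag \<Rightarrow> stype) \<Rightarrow> ('ag \<Rightarrow> stype) \<Rightarrow> 'ag set \<Rightarrow> bool" where
  "coarser \<pi>1 \<pi>2 A \<longleftrightarrow>
     (\<forall>i\<in>A. \<pi>1 i = \<pi>2 i) \<and>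
     (\<forall>j\<in>-A. (\<pi>1 j = IR \<and> \<pi>2 j = IR) \<or>
             (\<pi>1 j = Ir \<and> \<pi>2 j \<in> {IR, Ir}) \<or>
             (\<pi>1 j = iR \<and> \<pi>2 j \<in> {IR, iR}) \<or>
             \<pi>1 j = ir)"

end

theory Submission
  imports Defs
begin

text \<open>Positive formulas use coalition operators only positively and with LTL bodies, whose
  truth on a path does not depend on the strategy types. Passing from \<open>\<pi>2\<close> to a coarser
  \<open>\<pi>1\<close> leaves the strategies of the coalition agents (which occur in the formula) unchanged,
  while every \<open>\<pi>1\<close>-strategy of an opponent is also a \<open>\<pi>2\<close>-strategy; so a coalition strategy
  winning against all \<open>\<pi>2\<close>-opponents also wins against all \<open>\<pi>1\<close>-opponents. Structural
  induction on the formula finishes the argument.\<close>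

lemma sat_p_ltl_stype_indep:
  "is_ltl \<psi> \<Longrightarrow> sat_p G \<pi>1 p \<psi> \<longleftrightarrow> sat_p G \<pi>2 p \<psi>"
proof (induction \<psi> arbitrary: p rule: pform.induct[where ?P1.0 = "\<lambda>_. True"])
  case (PState \<phi>)
  then show ?case by (cases \<phi>) auto
qed auto

definition stype_le :: "stype \<Rightarrow> stype \<Rightarrow> bool" where
  "stype_le t1 t2 \<longleftrightarrow>
     (t1 = IR \<and> t2 = IR) \<or> (t1 = Ir \<and> t2 \<in> {IR, Ir}) \<or> (t1 = iR \<and> t2 \<in> {IR, iR}) \<or> t1 = ir"

lemma stype_le_refl: "stype_le t t"
  by (cases t) (auto simp: stype_le_def)

lemma coarser_iff:
  "coarser \<pi>1 \<pi>2 A \<longleftrightarrow> (\<forall>i\<in>A. \<pi>1 i = \<pi>2 i) \<and> (\<forall>j. stype_le (\<pi>1 j) (\<pi>2 j))"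
proof -
  have "stype_le (\<pi>1 j) (\<pi>2 j)" if "coarser \<pi>1 \<pi>2 A" for j
    using that stype_le_refl[of "\<pi>2 j"]
    unfolding coarser_def stype_le_def by (cases "j \<in> A") auto
  then show ?thesis
    unfolding coarser_def stype_le_def by auto
qed

lemma coarser_subset: "coarser \<pi>1 \<pi>2 A \<Longrightarrow> B \<subseteq> A \<Longrightarrow> coarser \<pi>1 \<pi>2 B"
  unfolding coarser_iff by blast

lemma hist_indist_last:
  assumes "hist_indist G i h h'" "h \<noteq> []"
  shows "Indist G i (last h) (last h')"
proof -
  have "h' \<noteq> []" "length h' = length h"
    using assms by (auto simp: hist_indist_def)
  then show ?thesis
    using assms by (simp add: hist_indist_def last_conv_nth)
qed

lemma is_strat_ir_imp_iR: "is_strat G ir i \<theta> \<Longrightarrow> is_strat G iR i \<theta>"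
proof -
  assume "is_strat G ir i \<theta>"
  then obtain f where prot: "\<forall>s. f s \<in> Prot G i s"
    and uniform: "\<forall>s s'. Indist G i s s' \<longrightarrow> f s = f s'"
    and memoryless: "\<forall>h. \<theta> h = f (last h)"
    by (auto simp: is_strat_def)
  have "\<theta> h = \<theta> h'" if "h \<in> FPath G" "hist_indist G i h h'" for h h'
    using that hist_indist_last[of G i h h'] uniform memoryless by (auto simp: FPath_def)
  with prot memoryless show ?thesis
    by (simp add: is_strat_def)
qed

lemma is_strat_stype_le:
  assumes "stype_le t1 t2" "is_strat G t1 i \<theta>"
  shows "is_strat G t2 i \<theta>"
proof -
  have ir_imp_Ir: "is_strat G Ir i \<theta>" if "is_strat G ir i \<theta>"
    using that unfolding is_strat_def by (simp, blast)
  have Ir_imp_IR: "is_strat G IR i \<theta>" if "is_strat G Ir i \<theta>"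
    using that unfolding is_strat_def by auto
  have iR_imp_IR: "is_strat G IR i \<theta>" if "is_strat G iR i \<theta>"
    using that unfolding is_strat_def by simp
  from assms show ?thesis
    unfolding stype_le_def
    by (cases t2) (auto intro: ir_imp_Ir Ir_imp_IR iR_imp_IR is_strat_ir_imp_iR)
qed

lemma sat_Coal_stype_mono:
  assumes coalition: "\<forall>i\<in>A. \<pi>1 i = \<pi>2 i"
    and opponents: "\<forall>j. stype_le (\<pi>1 j) (\<pi>2 j)"
    and "is_ltl \<psi>"
    and "sat_s G \<pi>2 s (Coal A \<psi>)"
  shows "sat_s G \<pi>1 s (Coal A \<psi>)"
proof -
  from assms(4) obtain \<sigma>A where
    strat: "\<forall>i\<in>A. is_strat G (\<pi>2 i) i (\<sigma>A i)" and
    wins: "\<forall>\<sigma>B. (\<forall>i\<in>-A. is_strat G (\<pi>2 i) i (\<sigma>B i)) \<longrightarrow>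
             sat_p G \<pi>2 (play G (\<lambda>i. if i \<in> A then \<sigma>A i else \<sigma>B i) s) \<psi>"
    by auto
  have "sat_p G \<pi>1 (play G (\<lambda>i. if i \<in> A then \<sigma>A i else \<sigma>B i) s) \<psi>"
    if "\<forall>i\<in>-A. is_strat G (\<pi>1 i) i (\<sigma>B i)" for \<sigma>B
  proof -
    have "\<forall>i\<in>-A. is_strat G (\<pi>2 i) i (\<sigma>B i)"
    proof
      fix i
      assume "i \<in> -A"
      with that have "is_strat G (\<pi>1 i) i (\<sigma>B i)" by blast
      then show "is_strat G (\<pi>2 i) i (\<sigma>B i)"
        by (rule is_strat_stype_le[OF opponents[rule_format]])
    qed
    then have "sat_p G \<pi>2 (play G (\<lambda>i. if i \<in> A then \<sigma>A i else \<sigma>B i) s) \<psi>"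
      using wins by simp
    then show ?thesis
      using sat_p_ltl_stype_indep[OF \<open>is_ltl \<psi>\<close>, of G \<pi>1 _ \<pi>2] by blast
  qed
  moreover have "\<forall>i\<in>A. is_strat G (\<pi>1 i) i (\<sigma>A i)"
    using strat coalition by simp
  ultimately show ?thesis
    unfolding sat_s.simps by blast
qed

lemma sat_s_positive_coarser:
  "positive \<phi> \<Longrightarrow> coarser \<pi>1 \<pi>2 (agents_s \<phi>) \<Longrightarrow> sat_s G \<pi>2 s \<phi> \<Longrightarrow> sat_s G \<pi>1 s \<phi>"
proof (induction \<phi> arbitrary: s rule: sform.induct[where ?P2.0 = "\<lambda>_. True"])
  case (SNeg \<phi>)
  then show ?case by (cases \<phi>) (auto simp: positive_def)
next
  case (SAnd \<phi> \<psi>)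
  have "positive \<phi>" "positive \<psi>"
    using SAnd.prems(1) by (simp_all add: positive_def)
  moreover have "coarser \<pi>1 \<pi>2 (agents_s \<phi>)" "coarser \<pi>1 \<pi>2 (agents_s \<psi>)"
    using coarser_subset[OF SAnd.prems(2)] by simp_all
  ultimately show ?case
    using SAnd.IH SAnd.prems(3) by simp
next
  case (SOr \<phi> \<psi>)
  have "positive \<phi>" "positive \<psi>"
    using SOr.prems(1) by (simp_all add: positive_def)
  moreover have "coarser \<pi>1 \<pi>2 (agents_s \<phi>)" "coarser \<pi>1 \<pi>2 (agents_s \<psi>)"
    using coarser_subset[OF SOr.prems(2)] by simp_all
  ultimately show ?case
    using SOr.IH SOr.prems(3) by auto
next
  case (Coal A \<psi>)
  have "\<forall>i\<in>A. \<pi>1 i = \<pi>2 i" "\<forall>j. stype_le (\<pi>1 j) (\<pi>2 j)"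
    using Coal.prems(2) by (simp_all add: coarser_iff)
  moreover have "is_ltl \<psi>"
    using Coal.prems(1) by (simp add: positive_def)
  ultimately show ?case
    using Coal.prems(3) by (rule sat_Coal_stype_mono)
next
  case (CoalDual A \<psi>)
  then show ?case by (simp add: positive_def)
qed simp_all

theorem proposition4:
  fixes G :: "('s::finite, 'ag::finite, 'act, 'ap::finite) cgs"
    and s :: 's
    and \<phi> :: "('ap, 'ag) sform"
    and \<pi>1 \<pi>2 :: "'ag \<Rightarrow> stype"
  assumes "acgs G \<pi>1"
    and "acgs G \<pi>2"
    and "positive \<phi>"
    and "coarser \<pi>1 \<pi>2 (agents_s \<phi>)"
    and "sat_s G \<pi>2 s \<phi>"
  shows "sat_s G \<pi>1 s \<phi>"
  using sat_s_positive_coarser assms(3-5) .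

end
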